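(* Let $(A,\cdot,\circ)$ be a skew brace and let $B$, $C$ be sub-skew braces of $A$. (a) If $A = B\cdot C$ and $B$ is a left ideal in $A$ or in $A^{\mathrm{op}}$, then $A = B\circ C$. (b) If $A = B\circ C$ and $B$ is a right ideal in $A$ or in $A^{\mathrm{op}}$, then $A = B\cdot C$.
   Context: A skew brace is a set $A$ with two group operations $\cdot$ (often written by juxtaposition) and $\circ$ such that $a\circ(bc) = (a\circ b)\,a^{-1}\,(a\circ c)$ for all $a,b,c\in A$. $a^{-1}$ denotes the inverse in $(A,\cdot)$. Define $a*b = a^{-1}(a\circ b)b^{-1}$, $\lambda_a(b)=a^{-1}(a\circ b)$, $\lambda^{\mathrm{op}}_a(b)=(a\circ b)a^{-1}$. A sub-skew brace is a subset that is a subgroup of both $(A,\cdot)$ and $(A,\circ)$. $A=B\cdot C$ means every element is $bc$ with $b\in B,c\in C$; $A=B\circ C$ similarly. A subgroup $I$ of $(A,\cdot)$ is a left ideal in $A$ iff $\lambda_a(x)\in I$ for all $a\in A,x\in I$, and a right ideal in $A$ iff $\lambda_x(a)a^{-1}\in I$ for all $x\in I,a\in A$. The opposite skew brace $A^{\mathrm{op}}$ is $A$ with $a\cdot^{\mathrm{op}}b=ba$ and the same $\circ$; $I$ is a left ideal in $A^{\mathrm{op}}$ iff $\lambda^{\mathrm{op}}_a(x)\in I$ for all $a\in A,x\in I$, and a right ideal in $A^{\mathrm{op}}$ iff $a^{-1}\lambda^{\mathrm{op}}_x(a)\in I$ for all $x\in I,a\in A$. *)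

theory Defs
  imports "HOL-Algebra.Group"
begin

definition dot_grp :: "'a set \<Rightarrow> ('a \<Rightarrow> 'a \<Rightarrow> 'a) \<Rightarrow> 'a \<Rightarrow> 'a monoid" where
  "dot_grp A f e = \<lparr>carrier = A, mult = f, one = e\<rparr>"

definition skew_brace ::
  "'a set \<Rightarrow> ('a \<Rightarrow> 'a \<Rightarrow> 'a) \<Rightarrow> 'a \<Rightarrow> ('a \<Rightarrow> 'a \<Rightarrow> 'a) \<Rightarrow> 'a \<Rightarrow> bool" where
  "skew_brace A dt e1 cr e2 \<longleftrightarrow>
     group (dot_grp A dt e1) \<and> group (dot_grp A cr e2) \<and>
     (\<forall>a\<in>A. \<forall>b\<in>A. \<forall>c\<in>A.
        cr a (dt b c) = dt (dt (cr a b) (inv\<^bsub>dot_grp A dt e1\<^esub> a)) (cr a c))"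

definition sub_skew_brace ::
  "'a set \<Rightarrow> 'a set \<Rightarrow> ('a \<Rightarrow> 'a \<Rightarrow> 'a) \<Rightarrow> 'a \<Rightarrow> ('a \<Rightarrow> 'a \<Rightarrow> 'a) \<Rightarrow> 'a \<Rightarrow> bool" where
  "sub_skew_brace B A dt e1 cr e2 \<longleftrightarrow>
     subgroup B (dot_grp A dt e1) \<and> subgroup B (dot_grp A cr e2)"

definition lam :: "'a set \<Rightarrow> ('a \<Rightarrow> 'a \<Rightarrow> 'a) \<Rightarrow> 'a \<Rightarrow> ('a \<Rightarrow> 'a \<Rightarrow> 'a) \<Rightarrow> 'a \<Rightarrow> 'a \<Rightarrow> 'a" where
  "lam A dt e1 cr a b = dt (inv\<^bsub>dot_grp A dt e1\<^esub> a) (cr a b)"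

definition lam_op :: "'a set \<Rightarrow> ('a \<Rightarrow> 'a \<Rightarrow> 'a) \<Rightarrow> 'a \<Rightarrow> ('a \<Rightarrow> 'a \<Rightarrow> 'a) \<Rightarrow> 'a \<Rightarrow> 'a \<Rightarrow> 'a" where
  "lam_op A dt e1 cr a b = dt (cr a b) (inv\<^bsub>dot_grp A dt e1\<^esub> a)"

definition left_ideal where
  "left_ideal I A dt e1 cr \<longleftrightarrow> subgroup I (dot_grp A dt e1) \<and>
     (\<forall>a\<in>A. \<forall>x\<in>I. lam A dt e1 cr a x \<in> I)"

definition right_ideal where
  "right_ideal I A dt e1 cr \<longleftrightarrow> subgroup I (dot_grp A dt e1) \<and>
     (\<forall>x\<in>I. \<forall>a\<in>A. dt (lam A dt e1 cr x a) (inv\<^bsub>dot_grp A dt e1\<^esub> a) \<in> I)"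

definition left_ideal_op where
  "left_ideal_op I A dt e1 cr \<longleftrightarrow> subgroup I (dot_grp A dt e1) \<and>
     (\<forall>a\<in>A. \<forall>x\<in>I. lam_op A dt e1 cr a x \<in> I)"

definition right_ideal_op where
  "right_ideal_op I A dt e1 cr \<longleftrightarrow> subgroup I (dot_grp A dt e1) \<and>
     (\<forall>x\<in>I. \<forall>a\<in>A. dt (inv\<^bsub>dot_grp A dt e1\<^esub> a) (lam_op A dt e1 cr x a) \<in> I)"

definition set_prod :: "('a \<Rightarrow> 'a \<Rightarrow> 'a) \<Rightarrow> 'a set \<Rightarrow> 'a set \<Rightarrow> 'a set" where
  "set_prod f B C = {f b c | b c. b \<in> B \<and> c \<in> C}"

end

theory Submission
  imports Defs
begin

text \<open>Write \<open>c'\<close> for the inverse of \<open>c\<close> in \<open>(A,\<circ>)\<close> and \<open>x\<^sup>-\<^sup>1\<close> for inverses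
  in \<open>(A,\<cdot>)\<close>. Expanding \<open>a \<circ> (b b\<^sup>-\<^sup>1) = a\<close> by the brace law gives
  \<open>a \<circ> b\<^sup>-\<^sup>1 = a (a \<circ> b)\<^sup>-\<^sup>1 a\<close>, in particular \<open>c \<circ> c'\<^sup>-\<^sup>1 = c c\<close>. With one more use of
  the brace law this yields \<open>c \<circ> \<lambda>\<^bsub>c'\<^esub>(b) = c b\<close> and \<open>c \<circ> \<lambda>\<^sup>o\<^sup>p\<^bsub>c'\<^esub>(b) = b c\<close>, so when \<open>B\<close>
  is a left ideal of \<open>A\<close> or of \<open>A\<^sup>o\<^sup>p\<close> the products \<open>c b\<close>, resp. \<open>b c\<close>, lie in \<open>C \<circ> B\<close>.
  Conversely \<open>b \<circ> c = b (\<lambda>\<^bsub>b\<^esub>(c) c\<^sup>-\<^sup>1) c = c (c\<^sup>-\<^sup>1 \<lambda>\<^sup>o\<^sup>p\<^bsub>b\<^esub>(c)) b\<close> handles right ideals.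
  The order of the factors is immaterial: in a group, \<open>G = H K\<close> for subgroups \<open>H, K\<close>
  implies \<open>G = K H\<close> by passing to inverses.\<close>

lemma (in group) set_prod_subset_carrier:
  assumes "subgroup H G" and "subgroup K G"
  shows "set_prod (\<otimes>) H K \<subseteq> carrier G"
  using assms unfolding set_prod_def by (auto dest: subgroup.mem_carrier)

lemma (in group) carrier_eq_set_prod_swap:
  assumes H: "subgroup H G" and K: "subgroup K G" and eq: "carrier G \<subseteq> set_prod (\<otimes>) H K"
  shows "carrier G = set_prod (\<otimes>) K H"
proof
  show "carrier G \<subseteq> set_prod (\<otimes>) K H"
  proof
    fix x assume x: "x \<in> carrier G"
    then obtain h k where hk: "h \<in> H" "k \<in> K" "inv x = h \<otimes> k"
      using eq unfolding set_prod_def by blast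
    then have "h \<in> carrier G" "k \<in> carrier G" using H K by (auto dest: subgroup.mem_carrier)
    with hk x have "x = inv k \<otimes> inv h" by (metis inv_inv inv_mult_group)
    with hk show "x \<in> set_prod (\<otimes>) K H"
      unfolding set_prod_def using H K by (blast intro: subgroup.m_inv_closed)
  qed
  show "set_prod (\<otimes>) K H \<subseteq> carrier G" by (rule set_prod_subset_carrier[OF K H])
qed

locale skew_brace_setting =
  fixes A dt e1 cr e2
  assumes skew_brace: "skew_brace A dt e1 cr e2"
begin

abbreviation "G_dot \<equiv> dot_grp A dt e1"
abbreviation "G_circ \<equiv> dot_grp A cr e2"
abbreviation "dinv a \<equiv> inv\<^bsub>G_dot\<^esub> a"
abbreviation "cinv a \<equiv> inv\<^bsub>G_circ\<^esub> a"

sublocale dot: group G_dot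
  rewrites "carrier G_dot = A" and "mult G_dot = dt" and "one G_dot = e1"
  using skew_brace unfolding skew_brace_def by (simp_all add: dot_grp_def)

sublocale circ: group G_circ
  rewrites "carrier G_circ = A" and "mult G_circ = cr" and "one G_circ = e2"
  using skew_brace unfolding skew_brace_def by (simp_all add: dot_grp_def)

lemma brace_law:
  "\<lbrakk>a \<in> A; b \<in> A; c \<in> A\<rbrakk> \<Longrightarrow> cr a (dt b c) = dt (dt (cr a b) (dinv a)) (cr a c)"
  using skew_brace unfolding skew_brace_def by blast

lemma circ_one_dot_right:
  assumes a: "a \<in> A"
  shows "cr a e1 = a"
proof -
  have ae: "cr a e1 \<in> A" using a by simp
  have "cr a e1 = dt (dt (cr a e1) (dinv a)) (cr a e1)"
    using brace_law[OF a, of e1 e1] by simp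
  then have "dt (cr a e1) (dinv a) = e1" using ae a by simp
  then show ?thesis using a ae
    by (metis dot.inv_closed dot.inv_equality dot.inv_inv)
qed

lemma one_dot_eq_one_circ: "e1 = e2"
  using circ_one_dot_right[of e2] circ.l_one[of e1] circ.one_closed dot.one_closed by simp

lemma circ_dot_inv:
  assumes a: "a \<in> A" and b: "b \<in> A"
  shows "cr a (dinv b) = dt (dt a (dinv (cr a b))) a"
proof -
  have ab: "cr a b \<in> A" and abi: "cr a (dinv b) \<in> A"
    using a b by simp_all
  have "a = dt (dt (cr a b) (dinv a)) (cr a (dinv b))"
    using brace_law[OF a b, of "dinv b"] b circ_one_dot_right[OF a] by simp
  then show ?thesis using a ab abi
    by (metis dot.inv_closed dot.m_assoc dot.m_closed dot.inv_solve_left)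
qed

lemma circ_dot_inv_cinv: "c \<in> A \<Longrightarrow> cr c (dinv (cinv c)) = dt c c"
proof -
  assume c: "c \<in> A"
  have "cr c (cinv c) = e1" using c by (simp add: one_dot_eq_one_circ)
  with circ_dot_inv[OF c circ.inv_closed[OF c]]
  have "cr c (dinv (cinv c)) = dt (dt c (dinv e1)) c" by simp
  then show ?thesis using c by simp
qed

lemma circ_cinv_cancel_left: "\<lbrakk>c \<in> A; y \<in> A\<rbrakk> \<Longrightarrow> cr c (cr (cinv c) y) = y"
  by (simp add: circ.m_assoc[symmetric])

lemma circ_lam_cinv:
  assumes c: "c \<in> A" and b: "b \<in> A"
  shows "cr c (lam A dt e1 cr (cinv c) b) = dt c b"
proof -
  have "cr c (lam A dt e1 cr (cinv c) b)
      = dt (dt (dt c c) (dinv c)) (cr c (cr (cinv c) b))"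
    unfolding lam_def using brace_law[OF c] circ_dot_inv_cinv[OF c] c b
    by simp
  also have "\<dots> = dt c b"
    using circ_cinv_cancel_left[OF c b] c b by (simp add: dot.m_assoc)
  finally show ?thesis .
qed

lemma circ_lam_op_cinv:
  assumes c: "c \<in> A" and b: "b \<in> A"
  shows "cr c (lam_op A dt e1 cr (cinv c) b) = dt b c"
proof -
  have "cr c (lam_op A dt e1 cr (cinv c) b)
      = dt (dt (cr c (cr (cinv c) b)) (dinv c)) (dt c c)"
    unfolding lam_op_def using brace_law[OF c] circ_dot_inv_cinv[OF c] c b
    by simp
  also have "\<dots> = dt b c"
    using circ_cinv_cancel_left[OF c b] c b by (simp add: dot.m_assoc[symmetric]) (simp add: dot.m_assoc)
  finally show ?thesis .
qed

lemma dot_mem_circ_prod_if_left_ideal: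
  assumes B: "left_ideal B A dt e1 cr" and b: "b \<in> B" and c: "c \<in> C" and CA: "C \<subseteq> A"
  shows "dt c b \<in> set_prod cr C B"
proof -
  have "B \<subseteq> A" using B dot.subgroupE(1) unfolding left_ideal_def by simp
  then have "b \<in> A" "c \<in> A" using b c CA by blast+
  moreover have "lam A dt e1 cr (cinv c) b \<in> B"
    using B b \<open>c \<in> A\<close> unfolding left_ideal_def by simp
  ultimately show ?thesis using circ_lam_cinv[of c b, symmetric] c unfolding set_prod_def by blast
qed

lemma dot_mem_circ_prod_if_left_ideal_op:
  assumes B: "left_ideal_op B A dt e1 cr" and b: "b \<in> B" and c: "c \<in> C" and CA: "C \<subseteq> A"
  shows "dt b c \<in> set_prod cr C B"
proof -
  have "B \<subseteq> A" using B dot.subgroupE(1) unfolding left_ideal_op_def by simp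
  then have "b \<in> A" "c \<in> A" using b c CA by blast+
  moreover have "lam_op A dt e1 cr (cinv c) b \<in> B"
    using B b \<open>c \<in> A\<close> unfolding left_ideal_op_def by simp
  ultimately show ?thesis using circ_lam_op_cinv[of c b, symmetric] c unfolding set_prod_def by blast
qed

lemma circ_mem_dot_prod_if_right_ideal:
  assumes B: "right_ideal B A dt e1 cr" and b: "b \<in> B" and c: "c \<in> C" and CA: "C \<subseteq> A"
  shows "cr b c \<in> set_prod dt B C"
proof -
  have sub: "subgroup B G_dot" using B unfolding right_ideal_def by blast
  then have "B \<subseteq> A" by (rule dot.subgroupE(1))
  then have "b \<in> A" "c \<in> A" using b c CA by blast+
  define b' where "b' = dt b (dt (lam A dt e1 cr b c) (dinv c))"
  have t: "dt (lam A dt e1 cr b c) (dinv c) \<in> B" using B b \<open>c \<in> A\<close> unfolding right_ideal_def by blast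
  have "b' \<in> B" unfolding b'_def using dot.subgroupE(4)[OF sub b t] .
  moreover have "cr b c = dt b' c"
    unfolding b'_def lam_def using \<open>b \<in> A\<close> \<open>c \<in> A\<close> by (simp add: dot.m_assoc) (simp add: dot.m_assoc[symmetric])
  ultimately show ?thesis using c unfolding set_prod_def by blast
qed

lemma circ_mem_dot_prod_if_right_ideal_op:
  assumes B: "right_ideal_op B A dt e1 cr" and b: "b \<in> B" and c: "c \<in> C" and CA: "C \<subseteq> A"
  shows "cr b c \<in> set_prod dt C B"
proof -
  have sub: "subgroup B G_dot" using B unfolding right_ideal_op_def by blast
  then have "B \<subseteq> A" by (rule dot.subgroupE(1))
  then have "b \<in> A" "c \<in> A" using b c CA by blast+
  define b' where "b' = dt (dt (dinv c) (lam_op A dt e1 cr b c)) b"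
  have t: "dt (dinv c) (lam_op A dt e1 cr b c) \<in> B" using B b \<open>c \<in> A\<close> unfolding right_ideal_op_def by blast
  have "b' \<in> B" unfolding b'_def using dot.subgroupE(4)[OF sub t b] .
  moreover have "cr b c = dt c b'"
    unfolding b'_def lam_op_def using \<open>b \<in> A\<close> \<open>c \<in> A\<close>
    by (simp add: dot.m_assoc[symmetric]) (simp add: dot.m_assoc)
  ultimately show ?thesis using c unfolding set_prod_def by blast
qed

lemma circ_factorization_if_dot_factorization:
  assumes B: "sub_skew_brace B A dt e1 cr e2" and C: "sub_skew_brace C A dt e1 cr e2"
    and dot_eq: "A = set_prod dt B C"
    and ideal: "left_ideal B A dt e1 cr \<or> left_ideal_op B A dt e1 cr"
  shows "A = set_prod cr B C"
proof -
  have B_dot: "subgroup B G_dot" and C_dot: "subgroup C G_dot"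
    and B_circ: "subgroup B G_circ" and C_circ: "subgroup C G_circ"
    using B C unfolding sub_skew_brace_def by auto
  have CA: "C \<subseteq> A" using C_dot by (rule dot.subgroupE(1))
  have "A \<subseteq> set_prod cr C B"
  proof
    fix x assume x: "x \<in> A"
    show "x \<in> set_prod cr C B"
    proof (cases "left_ideal B A dt e1 cr")
      case True
      have "A = set_prod dt C B"
        using dot.carrier_eq_set_prod_swap[OF B_dot C_dot equalityD1[OF dot_eq]] .
      then obtain c b where "c \<in> C" "b \<in> B" "x = dt c b"
        using x unfolding set_prod_def by blast
      then show ?thesis using dot_mem_circ_prod_if_left_ideal[OF True _ _ CA] by blast
    next
      case False
      then have left_ideal_op: "left_ideal_op B A dt e1 cr" using ideal by blast
      obtain b c where "b \<in> B" "c \<in> C" "x = dt b c"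
        using x dot_eq unfolding set_prod_def by blast
      then show ?thesis using dot_mem_circ_prod_if_left_ideal_op[OF left_ideal_op _ _ CA] by blast
    qed
  qed
  then show ?thesis by (rule circ.carrier_eq_set_prod_swap[OF C_circ B_circ])
qed

lemma dot_factorization_if_circ_factorization:
  assumes B: "sub_skew_brace B A dt e1 cr e2" and C: "sub_skew_brace C A dt e1 cr e2"
    and circ_eq: "A = set_prod cr B C"
    and ideal: "right_ideal B A dt e1 cr \<or> right_ideal_op B A dt e1 cr"
  shows "A = set_prod dt B C"
proof -
  have B_dot: "subgroup B G_dot" and C_dot: "subgroup C G_dot"
    using B C unfolding sub_skew_brace_def by auto
  have CA: "C \<subseteq> A" using C_dot by (rule dot.subgroupE(1))
  show ?thesis
  proof (cases "right_ideal B A dt e1 cr")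
    case True
    have "A \<subseteq> set_prod dt B C"
      using circ_eq circ_mem_dot_prod_if_right_ideal[OF True _ _ CA]
      unfolding set_prod_def[of cr] by blast
    then show ?thesis using dot.set_prod_subset_carrier[OF B_dot C_dot] by blast
  next
    case False
    then have right_ideal_op: "right_ideal_op B A dt e1 cr" using ideal by blast
    have "A \<subseteq> set_prod dt C B"
      using circ_eq circ_mem_dot_prod_if_right_ideal_op[OF right_ideal_op _ _ CA]
      unfolding set_prod_def[of cr] by blast
    then show ?thesis by (rule dot.carrier_eq_set_prod_swap[OF C_dot B_dot])
  qed
qed

end

theorem lemma2p7:
  assumes "skew_brace A dt e1 cr e2"
    and "sub_skew_brace B A dt e1 cr e2"
    and "sub_skew_brace C A dt e1 cr e2"
  shows "(A = set_prod dt B C \<and>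
           (left_ideal B A dt e1 cr \<or> left_ideal_op B A dt e1 cr)
             \<longrightarrow> A = set_prod cr B C)
       \<and> (A = set_prod cr B C \<and>
           (right_ideal B A dt e1 cr \<or> right_ideal_op B A dt e1 cr)
             \<longrightarrow> A = set_prod dt B C)"
proof -
  interpret skew_brace_setting A dt e1 cr e2 by unfold_locales (rule assms(1))
  show ?thesis
    using circ_factorization_if_dot_factorization[OF assms(2,3)]
      dot_factorization_if_circ_factorization[OF assms(2,3)] by blast
qed

end
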